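(* Let $G$ be a graph and $x$ an arbitrary vertex of $G$. Then there exists an L-sequence of $G$ of length $\gamma_{gr}^{L}(G)$ that contains $x$.
   Context: For a graph $G$, $N(v)$ is the open neighborhood and $N[v]=N(v)\cup\{v\}$ the closed neighborhood of $v$. A sequence $(v_1,\ldots,v_k)$ of distinct vertices is an L-sequence if $N[v_i]\setminus\bigcup_{j=1}^{i-1}N(v_j)\neq\emptyset$ for each $i\in[k]$. The L-Grundy domination number $\gamma_{gr}^{L}(G)$ is the maximum length of an L-sequence in $G$. *)

theory Defs
  imports Main
begin

definition graph :: "'a set \<Rightarrow> ('a \<Rightarrow> 'a \<Rightarrow> bool) \<Rightarrow> bool" where
  "graph V E \<longleftrightarrow> finite V \<and> (\<forall>u v. E u v \<longrightarrow> u \<in> V \<and> v \<in> V)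
     \<and> (\<forall>u v. E u v \<longrightarrow> E v u) \<and> (\<forall>v. \<not> E v v)"

definition open_nbhd :: "'a set \<Rightarrow> ('a \<Rightarrow> 'a \<Rightarrow> bool) \<Rightarrow> 'a \<Rightarrow> 'a set" where
  "open_nbhd V E v = {u \<in> V. E v u}"

definition closed_nbhd :: "'a set \<Rightarrow> ('a \<Rightarrow> 'a \<Rightarrow> bool) \<Rightarrow> 'a \<Rightarrow> 'a set" where
  "closed_nbhd V E v = insert v (open_nbhd V E v)"

text \<open>L-sequence (v_1,...,v_k), represented as a list with vs!(i) = v_{i+1}.\<close>
definition L_sequence :: "'a set \<Rightarrow> ('a \<Rightarrow> 'a \<Rightarrow> bool) \<Rightarrow> 'a list \<Rightarrow> bool" where
  "L_sequence V E vs \<longleftrightarrow> distinct vs \<and> set vs \<subseteq> V \<and>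
     (\<forall>i < length vs. closed_nbhd V E (vs ! i) - (\<Union>j<i. open_nbhd V E (vs ! j)) \<noteq> {})"

definition L_grundy_dom :: "'a set \<Rightarrow> ('a \<Rightarrow> 'a \<Rightarrow> bool) \<Rightarrow> nat" where
  "L_grundy_dom V E = Max (length ` {vs. L_sequence V E vs})"

end

theory Submission
  imports Defs
begin

text \<open>Take an L-sequence of maximum length not containing \<open>x\<close>. By maximality it cannot be
  extended by \<open>x\<close>, so the open neighbourhoods of its vertices cover \<open>N[x]\<close>. Let \<open>v\<close> be the
  vertex at which \<open>N[x]\<close> first becomes covered and replace \<open>v\<close> by \<open>x\<close>: the vertices before
  \<open>v\<close> do not cover \<open>N[x]\<close>, so \<open>x\<close> is a legal move there, and afterwards every prefix
  covers no more than before, because \<open>N(x) \<subseteq> N[x]\<close> was already covered by the prefix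
  ending in \<open>v\<close>.\<close>

definition open_nbhds :: "'a set \<Rightarrow> ('a \<Rightarrow> 'a \<Rightarrow> bool) \<Rightarrow> 'a list \<Rightarrow> 'a set" where
  "open_nbhds V E vs = (\<Union>v\<in>set vs. open_nbhd V E v)"

lemma open_nbhds_Nil [simp]: "open_nbhds V E [] = {}"
  and open_nbhds_append [simp]:
    "open_nbhds V E (xs @ ys) = open_nbhds V E xs \<union> open_nbhds V E ys"
  and open_nbhds_Cons [simp]:
    "open_nbhds V E (x # xs) = open_nbhd V E x \<union> open_nbhds V E xs"
  by (auto simp: open_nbhds_def)

lemma UN_open_nbhd_nth_eq_open_nbhds_take:
  assumes "i \<le> length vs"
  shows "(\<Union>j<i. open_nbhd V E (vs ! j)) = open_nbhds V E (take i vs)"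
proof -
  have "(\<Union>j<i. open_nbhd V E (vs ! j)) = (\<Union>v\<in>(!) vs ` {0..<i}. open_nbhd V E v)"
    by (simp add: atLeast0LessThan)
  then show ?thesis using assms by (simp add: nth_image open_nbhds_def)
qed

lemma L_sequence_iff_take:
  "L_sequence V E vs \<longleftrightarrow> distinct vs \<and> set vs \<subseteq> V \<and>
     (\<forall>i < length vs. \<not> closed_nbhd V E (vs ! i) \<subseteq> open_nbhds V E (take i vs))"
  by (auto simp: L_sequence_def UN_open_nbhd_nth_eq_open_nbhds_take)

lemma L_sequence_Nil [simp]: "L_sequence V E []"
  by (simp add: L_sequence_def)

lemma L_sequence_snoc:
  "L_sequence V E (vs @ [v]) \<longleftrightarrow> L_sequence V E vs \<and> v \<in> V \<and> v \<notin> set vs \<and>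
     \<not> closed_nbhd V E v \<subseteq> open_nbhds V E vs"
  by (auto simp: L_sequence_iff_take less_Suc_eq nth_append)

lemma L_sequence_length_le_card:
  assumes "finite V" "L_sequence V E vs"
  shows "length vs \<le> card V"
proof -
  have "set vs \<subseteq> V" "distinct vs" using assms(2) by (auto simp: L_sequence_def)
  with assms(1) show ?thesis by (metis card_mono distinct_card)
qed

lemma finite_L_sequence_lengths:
  assumes "finite V"
  shows "finite (length ` {vs. L_sequence V E vs})"
  by (rule finite_subset[of _ "{..card V}"]) (auto dest: L_sequence_length_le_card[OF assms])

lemma L_sequence_length_le_L_grundy_dom:
  assumes "finite V" "L_sequence V E vs"
  shows "length vs \<le> L_grundy_dom V E"
  unfolding L_grundy_dom_def using finite_L_sequence_lengths[OF assms(1)] assms(2) by simp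

lemma ex_L_sequence_of_length_L_grundy_dom:
  assumes "finite V"
  obtains vs where "L_sequence V E vs" "length vs = L_grundy_dom V E"
proof -
  have "length ` {vs. L_sequence V E vs} \<noteq> {}" using L_sequence_Nil by blast
  from Max_in[OF finite_L_sequence_lengths[OF assms] this] show ?thesis
    using that unfolding L_grundy_dom_def by auto
qed

lemma closed_nbhd_subset_open_nbhds_if_maximum:
  assumes "finite V" "L_sequence V E vs" "length vs = L_grundy_dom V E"
    and "x \<in> V" "x \<notin> set vs"
  shows "closed_nbhd V E x \<subseteq> open_nbhds V E vs"
proof (rule ccontr)
  assume "\<not> closed_nbhd V E x \<subseteq> open_nbhds V E vs"
  with assms(2,4,5) have "L_sequence V E (vs @ [x])" by (simp add: L_sequence_snoc)
  from L_sequence_length_le_L_grundy_dom[OF assms(1) this] assms(3) show False by simp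
qed

lemma split_list_first_prefix:
  assumes "\<not> P []" "P xs"
  shows "\<exists>as v bs. xs = as @ v # bs \<and> \<not> P as \<and> P (as @ [v])"
  using assms(2)
proof (induction xs rule: rev_induct)
  case Nil
  with assms(1) show ?case by simp
next
  case (snoc y ys)
  show ?case
  proof (cases "P ys")
    case True
    then obtain as v bs where "ys = as @ v # bs" "\<not> P as" "P (as @ [v])"
      using snoc.IH by blast
    then show ?thesis by (intro exI[of _ as] exI[of _ v] exI[of _ "bs @ [y]"]) simp
  next
    case False
    with snoc.prems show ?thesis by blast
  qed
qed

lemma L_sequence_exchange:
  assumes "L_sequence V E (as @ v # bs)" "x \<in> V" "x \<notin> set (as @ bs)"
    and "\<not> closed_nbhd V E x \<subseteq> open_nbhds V E as"
    and "closed_nbhd V E x \<subseteq> open_nbhds V E (as @ [v])"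
  shows "L_sequence V E (as @ x # bs)"
  using assms(1,3)
proof (induction bs rule: rev_induct)
  case Nil
  then have "L_sequence V E as" by (simp add: L_sequence_snoc)
  with Nil.prems(2) assms(2,4) show ?case by (simp add: L_sequence_snoc)
next
  case (snoc b bs)
  from snoc.prems(1) have prev: "L_sequence V E (as @ v # bs)" and b: "b \<in> V"
    "b \<notin> set (as @ v # bs)" "\<not> closed_nbhd V E b \<subseteq> open_nbhds V E (as @ v # bs)"
    using L_sequence_snoc[of V E "as @ v # bs" b] by simp_all
  have "L_sequence V E (as @ x # bs)" using snoc.IH prev snoc.prems(2) by simp
  moreover have "open_nbhd V E x \<subseteq> open_nbhds V E (as @ [v])"
    using assms(5) by (auto simp: closed_nbhd_def)
  then have "open_nbhds V E (as @ x # bs) \<subseteq> open_nbhds V E (as @ v # bs)" by auto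
  moreover have "b \<noteq> x" using snoc.prems(2) by auto
  ultimately show ?case using b L_sequence_snoc[of V E "as @ x # bs" b] by auto
qed

theorem proposition6p1:
  fixes V :: "'a set" and E :: "'a \<Rightarrow> 'a \<Rightarrow> bool" and x :: 'a
  assumes "graph V E" and "x \<in> V"
  shows "\<exists>vs. L_sequence V E vs \<and> length vs = L_grundy_dom V E \<and> x \<in> set vs"
proof -
  have "finite V" using assms(1) by (simp add: graph_def)
  obtain vs where L: "L_sequence V E vs" and len: "length vs = L_grundy_dom V E"
    using ex_L_sequence_of_length_L_grundy_dom[OF \<open>finite V\<close>] by blast
  show ?thesis
  proof (cases "x \<in> set vs")
    case True
    with L len show ?thesis by blast
  next
    case False
    let ?covers = "\<lambda>us. closed_nbhd V E x \<subseteq> open_nbhds V E us"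
    have "?covers vs"
      using closed_nbhd_subset_open_nbhds_if_maximum[OF \<open>finite V\<close> L len assms(2) False] .
    moreover have "\<not> ?covers []" by (simp add: closed_nbhd_def)
    ultimately obtain as v bs where vs: "vs = as @ v # bs" "\<not> ?covers as" "?covers (as @ [v])"
      using split_list_first_prefix[of ?covers vs] by blast
    then have "L_sequence V E (as @ x # bs)"
      using L_sequence_exchange[of V E as v bs x] L assms(2) False by simp
    moreover have "length (as @ x # bs) = L_grundy_dom V E" using len vs(1) by simp
    ultimately show ?thesis by (intro exI[of _ "as @ x # bs"]) simp
  qed
qed

end
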